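(* Let $\mathcal{F}$ be a fusion ring with structure constants $(N_{i,j}^k)$, index $1$ being the unit. Suppose there are indices $k_0\neq k_1$ such that $N_{i,j}^{k_0}\neq0$ and $N_{i,j}^{k_1}\neq0$ for all indices $i,j\neq1$. Then $\mathcal{F}$ passes the one spectrum criterion, i.e. there are no indices $i_0,i_1,\dots,i_9$ satisfying all of the following: (1) $N_{i_4,i_1}^{i_6},\ N_{i_5,i_4}^{i_2},\ N_{i_5,i_6}^{i_3},\ N_{i_7,i_9}^{i_1},\ N_{i_2,i_7}^{i_8},\ N_{i_8,i_9}^{i_3}\neq0$; (2) $\sum_kN_{i_4,i_7}^kN_{i_5^*,i_8}^kN_{i_6,i_9^*}^k=1$; (3) $N_{i_4,i_7}^{i_0}=N_{i_5^*,i_8}^{i_0}=N_{i_6,i_9^*}^{i_0}=1$; (4) $N_{i_2,i_1}^{i_3}=0$; (5) $\sum_kN_{i_5,i_4}^kN_{i_8,i_7^*}^k=1$ or $\sum_kN_{i_2,i_4^*}^kN_{i_8,i_0^*}^k=1$ or $\sum_kN_{i_5^*,i_2}^kN_{i_0,i_7^*}^k=1$; (6) $\sum_kN_{i_5,i_0}^kN_{i_3,i_9^*}^k=1$ or $\sum_kN_{i_8,i_0^*}^kN_{i_3,i_6^*}^k=1$ or $\sum_kN_{i_5^*,i_8}^kN_{i_6,i_9^*}^k=1$; (7) $\sum_kN_{i_4,i_7}^kN_{i_6,i_9^*}^k=1$ or $\sum_kN_{i_0,i_7^*}^kN_{i_6,i_1^*}^k=1$ or $\sum_kN_{i_4^*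,i_0}^kN_{i_1,i_9^*}^k=1$.
   Context: A fusion ring is a ring which is a free $\mathbb{Z}$-module with finite basis $\{b_1,\dots,b_r\}$, $b_ib_j=\sum_kN_{i,j}^kb_k$, $N_{i,j}^k\in\mathbb{Z}_{\ge0}$, associative, unit $b_1$, duality $i\mapsto i^*$ with $N_{i,k}^1=N_{k,i}^1=\delta_{i^*,k}$, and Frobenius reciprocity $N_{i,j}^k=N_{i^*,k}^j=N_{k,j^*}^i$. (If indices as in (1)–(7) exist, the fusion ring admits no categorification; "passing the one spectrum criterion" means no such indices exist.) *)

theory Defs
  imports Main
begin

text \<open>A fusion ring of rank r with basis indexed by {1..r}, unit index 1,
  structure constants N i j k (= N_{i,j}^k, nonnegative integers) and duality d.\<close>

definition fusion_ring :: "nat \<Rightarrow> (nat \<Rightarrow> nat \<Rightarrow> nat \<Rightarrow> nat) \<Rightarrow> (nat \<Rightarrow> nat) \<Rightarrow> bool" where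
  "fusion_ring r N d \<longleftrightarrow>
     r \<ge> 1
   \<and> (\<forall>i\<in>{1..r}. \<forall>j\<in>{1..r}. \<forall>k\<in>{1..r}. \<forall>l\<in>{1..r}.
        (\<Sum>m\<in>{1..r}. N i j m * N m k l) = (\<Sum>m\<in>{1..r}. N j k m * N i m l))
   \<and> (\<forall>i\<in>{1..r}. \<forall>j\<in>{1..r}. N 1 i j = (if i = j then 1 else 0) \<and> N i 1 j = (if i = j then 1 else 0))
   \<and> (\<forall>i\<in>{1..r}. d i \<in> {1..r})
   \<and> (\<forall>i\<in>{1..r}. \<forall>k\<in>{1..r}. N i k 1 = (if d i = k then 1 else 0) \<and> N k i 1 = (if d i = k then 1 else 0))
   \<and> (\<forall>i\<in>{1..r}. \<forall>j\<in>{1..r}. \<forall>k\<in>{1..r}. N i j k = N (d i) k j \<and> N i j k = N k (d j) i)"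

definition one_spectrum_witness ::
  "nat \<Rightarrow> (nat \<Rightarrow> nat \<Rightarrow> nat \<Rightarrow> nat) \<Rightarrow> (nat \<Rightarrow> nat) \<Rightarrow>
   nat \<Rightarrow> nat \<Rightarrow> nat \<Rightarrow> nat \<Rightarrow> nat \<Rightarrow> nat \<Rightarrow> nat \<Rightarrow> nat \<Rightarrow> nat \<Rightarrow> nat \<Rightarrow> bool" where
  "one_spectrum_witness r N d i0 i1 i2 i3 i4 i5 i6 i7 i8 i9 \<longleftrightarrow>
     \<comment> \<open>(1)\<close>
     N i4 i1 i6 \<noteq> 0 \<and> N i5 i4 i2 \<noteq> 0 \<and> N i5 i6 i3 \<noteq> 0 \<and> N i7 i9 i1 \<noteq> 0 \<and> N i2 i7 i8 \<noteq> 0 \<and> N i8 i9 i3 \<noteq> 0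
     \<comment> \<open>(2)\<close>
   \<and> (\<Sum>k\<in>{1..r}. N i4 i7 k * N (d i5) i8 k * N i6 (d i9) k) = 1
     \<comment> \<open>(3)\<close>
   \<and> N i4 i7 i0 = 1 \<and> N (d i5) i8 i0 = 1 \<and> N i6 (d i9) i0 = 1
     \<comment> \<open>(4)\<close>
   \<and> N i2 i1 i3 = 0
     \<comment> \<open>(5)\<close>
   \<and> ((\<Sum>k\<in>{1..r}. N i5 i4 k * N i8 (d i7) k) = 1
      \<or> (\<Sum>k\<in>{1..r}. N i2 (d i4) k * N i8 (d i0) k) = 1
      \<or> (\<Sum>k\<in>{1..r}. N (d i5) i2 k * N i0 (d i7) k) = 1)
     \<comment> \<open>(6)\<close>
   \<and> ((\<Sum>k\<in>{1..r}. N i5 i0 k * N i3 (d i9) k) = 1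
      \<or> (\<Sum>k\<in>{1..r}. N i8 (d i0) k * N i3 (d i6) k) = 1
      \<or> (\<Sum>k\<in>{1..r}. N (d i5) i8 k * N i6 (d i9) k) = 1)
     \<comment> \<open>(7)\<close>
   \<and> ((\<Sum>k\<in>{1..r}. N i4 i7 k * N i6 (d i9) k) = 1
      \<or> (\<Sum>k\<in>{1..r}. N i0 (d i7) k * N i6 (d i1) k) = 1
      \<or> (\<Sum>k\<in>{1..r}. N (d i4) i0 k * N i1 (d i9) k) = 1)"

definition passes_one_spectrum :: "nat \<Rightarrow> (nat \<Rightarrow> nat \<Rightarrow> nat \<Rightarrow> nat) \<Rightarrow> (nat \<Rightarrow> nat) \<Rightarrow> bool" where
  "passes_one_spectrum r N d \<longleftrightarrow>
     \<not> (\<exists>i0\<in>{1..r}. \<exists>i1\<in>{1..r}. \<exists>i2\<in>{1..r}. \<exists>i3\<in>{1..r}. \<exists>i4\<in>{1..r}.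
         \<exists>i5\<in>{1..r}. \<exists>i6\<in>{1..r}. \<exists>i7\<in>{1..r}. \<exists>i8\<in>{1..r}. \<exists>i9\<in>{1..r}.
         one_spectrum_witness r N d i0 i1 i2 i3 i4 i5 i6 i7 i8 i9)"

end

theory Submission
  imports Defs
begin

text \<open>Only conditions (1), (2) and (4) are needed.  By (1), the basis element \<open>i\<^sub>3\<close> occurs
  in \<open>i\<^sub>5 (i\<^sub>4 i\<^sub>1)\<close> through \<open>i\<^sub>6\<close> and in \<open>(i\<^sub>2 i\<^sub>7) i\<^sub>9\<close> through \<open>i\<^sub>8\<close>, while by (4) it occurs neither in
  \<open>(i\<^sub>5 i\<^sub>4) i\<^sub>1\<close> through \<open>i\<^sub>2\<close> nor in \<open>i\<^sub>2 (i\<^sub>7 i\<^sub>9)\<close> through \<open>i\<^sub>1\<close>.  If one of \<open>i\<^sub>4, i\<^sub>5, i\<^sub>6\<close> (resp.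
  \<open>i\<^sub>7, i\<^sub>8, i\<^sub>9\<close>) were the unit, unit and duality axioms together with Frobenius reciprocity
  would identify the two paths, contradicting (4).  Hence none of the six factors
  \<open>i\<^sub>4, i\<^sub>7, i\<^sub>5\<^sup>*, i\<^sub>8, i\<^sub>6, i\<^sub>9\<^sup>*\<close> of the sum in (2) is the unit, so by hypothesis every summand
  is nonzero at both \<open>k\<^sub>0\<close> and \<open>k\<^sub>1\<close>, and the sum is at least 2.\<close>

lemma two_le_sum_if_two_nonzero:
  fixes f :: "'a \<Rightarrow> nat"
  assumes "finite A" "a \<in> A" "b \<in> A" "a \<noteq> b" "f a \<noteq> 0" "f b \<noteq> 0"
  shows "2 \<le> sum f A"
proof -
  have "f a + f b = sum f {a, b}" using assms(4) by simp
  also have "\<dots> \<le> sum f A" by (rule sum_mono2) (use assms(1-3) in auto)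
  finally show ?thesis using assms(5,6) by linarith
qed

context
  fixes r :: nat and N :: "nat \<Rightarrow> nat \<Rightarrow> nat \<Rightarrow> nat" and d :: "nat \<Rightarrow> nat"
  assumes fr: "fusion_ring r N d"
begin

text \<open>The unfolded definition is only ever given to \<open>blast\<close>: as simplification rules, the
  associativity equations loop.\<close>

lemma fusion_ring_unit_in_range: "1 \<in> {1..r}"
proof -
  have "1 \<le> r" using fr unfolding fusion_ring_def by (elim conjE) assumption
  then show ?thesis by simp
qed

lemma fusion_ring_dual_in_range: "i \<in> {1..r} \<Longrightarrow> d i \<in> {1..r}"
  using fr unfolding fusion_ring_def by blast

lemma fusion_ring_unit_leftD:
  assumes "i \<in> {1..r}" "j \<in> {1..r}" "N 1 i j \<noteq> 0"
  shows "j = i"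
proof -
  have "N 1 i j = (if i = j then 1 else 0)"
    using fr assms(1,2) unfolding fusion_ring_def by blast
  with assms(3) show ?thesis by (simp split: if_splits)
qed

lemma fusion_ring_unit_rightD:
  assumes "i \<in> {1..r}" "j \<in> {1..r}" "N i 1 j \<noteq> 0"
  shows "j = i"
proof -
  have "N i 1 j = (if i = j then 1 else 0)"
    using fr assms(1,2) unfolding fusion_ring_def by blast
  with assms(3) show ?thesis by (simp split: if_splits)
qed

lemma fusion_ring_to_unitD:
  assumes "i \<in> {1..r}" "k \<in> {1..r}" "N i k 1 \<noteq> 0"
  shows "k = d i"
proof -
  have "N i k 1 = (if d i = k then 1 else 0)"
    using fr assms(1,2) unfolding fusion_ring_def by blast
  with assms(3) show ?thesis by (simp split: if_splits)
qed

lemma fusion_ring_frobenius_left: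
  "i \<in> {1..r} \<Longrightarrow> j \<in> {1..r} \<Longrightarrow> k \<in> {1..r} \<Longrightarrow> N i j k = N (d i) k j"
  using fr unfolding fusion_ring_def by blast

lemma fusion_ring_frobenius_right:
  "i \<in> {1..r} \<Longrightarrow> j \<in> {1..r} \<Longrightarrow> k \<in> {1..r} \<Longrightarrow> N i j k = N k (d j) i"
  using fr unfolding fusion_ring_def by blast

lemma fusion_ring_dual_eq_unitD:
  assumes "i \<in> {1..r}" "d i = 1"
  shows "i = 1"
proof -
  have "N i 1 1 = (if d i = 1 then 1 else 0)"
    using fr assms(1) fusion_ring_unit_in_range unfolding fusion_ring_def by blast
  with assms(2) have "N i 1 1 \<noteq> 0" by simp
  then show ?thesis
    using fusion_ring_unit_rightD[OF assms(1) fusion_ring_unit_in_range] by simp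
qed

text \<open>Associativity only guarantees that \<open>z\<close> occurs in the other bracketing of \<open>x a b\<close> through
  some constituent; when one of the factors involved is the unit, that constituent is forced to be
  the given one.\<close>

lemma fusion_ring_reassoc_left_if_unit:
  assumes range: "x \<in> {1..r}" "a \<in> {1..r}" "b \<in> {1..r}" "c \<in> {1..r}" "y \<in> {1..r}" "z \<in> {1..r}"
    and abc: "N a b c \<noteq> 0" and xcz: "N x c z \<noteq> 0" and xay: "N x a y \<noteq> 0"
    and unit: "x = 1 \<or> a = 1 \<or> c = 1"
  shows "N y b z \<noteq> 0"
  using unit
proof (elim disjE)
  assume "x = 1"
  then show ?thesis
    using abc fusion_ring_unit_leftD[OF range(2,5)] fusion_ring_unit_leftD[OF range(4,6)] xay xcz
    by auto
next
  assume "a = 1"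
  then show ?thesis
    using xcz fusion_ring_unit_leftD[OF range(3,4)] fusion_ring_unit_rightD[OF range(1,5)] abc xay
    by auto
next
  assume "c = 1"
  then have "b = d a" "z = x"
    using abc xcz fusion_ring_to_unitD[OF range(2,3)] fusion_ring_unit_rightD[OF range(1,6)]
    by auto
  then show ?thesis
    using xay fusion_ring_frobenius_right[OF range(1,2,5)] by simp
qed

lemma fusion_ring_reassoc_right_if_unit:
  assumes range: "x \<in> {1..r}" "a \<in> {1..r}" "b \<in> {1..r}" "c \<in> {1..r}" "y \<in> {1..r}" "z \<in> {1..r}"
    and xay: "N x a y \<noteq> 0" and ybz: "N y b z \<noteq> 0" and abc: "N a b c \<noteq> 0"
    and unit: "a = 1 \<or> b = 1 \<or> y = 1"
  shows "N x c z \<noteq> 0"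
  using unit
proof (elim disjE)
  assume "a = 1"
  then show ?thesis
    using xay fusion_ring_unit_rightD[OF range(1,5)] fusion_ring_unit_leftD[OF range(3,4)] abc ybz
    by auto
next
  assume "b = 1"
  then show ?thesis
    using abc fusion_ring_unit_rightD[OF range(2,4)] fusion_ring_unit_rightD[OF range(5,6)] ybz xay
    by auto
next
  assume "y = 1"
  then have "a = d x" "z = b"
    using xay ybz fusion_ring_to_unitD[OF range(1,2)] fusion_ring_unit_leftD[OF range(3,6)]
    by auto
  then show ?thesis
    using abc fusion_ring_frobenius_left[OF range(1,4,6)] by simp
qed

end

lemma fusion_ring_no_one_spectrum_witness:
  assumes fr: "fusion_ring r N d"
    and k01: "k0 \<in> {1..r}" "k1 \<in> {1..r}" "k0 \<noteq> k1"
    and nonzero: "\<forall>i\<in>{1..r}. \<forall>j\<in>{1..r}. i \<noteq> 1 \<and> j \<noteq> 1 \<longrightarrow> N i j k0 \<noteq> 0 \<and> N i j k1 \<noteq> 0"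
    and range: "i1 \<in> {1..r}" "i2 \<in> {1..r}" "i3 \<in> {1..r}" "i4 \<in> {1..r}" "i5 \<in> {1..r}"
      "i6 \<in> {1..r}" "i7 \<in> {1..r}" "i8 \<in> {1..r}" "i9 \<in> {1..r}"
    and witness: "one_spectrum_witness r N d i0 i1 i2 i3 i4 i5 i6 i7 i8 i9"
  shows False
proof -
  from witness have cond1: "N i4 i1 i6 \<noteq> 0" "N i5 i4 i2 \<noteq> 0" "N i5 i6 i3 \<noteq> 0"
      "N i7 i9 i1 \<noteq> 0" "N i2 i7 i8 \<noteq> 0" "N i8 i9 i3 \<noteq> 0"
    and cond2: "(\<Sum>k\<in>{1..r}. N i4 i7 k * N (d i5) i8 k * N i6 (d i9) k) = 1"
    and cond4: "N i2 i1 i3 = 0"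
    by (simp_all only: one_spectrum_witness_def simp_thms)
  have right: "i4 \<noteq> 1" "i5 \<noteq> 1" "i6 \<noteq> 1"
    using fusion_ring_reassoc_left_if_unit[OF fr range(5,4,1,6,2,3) cond1(1,3,2)] cond4
    by auto
  have left: "i7 \<noteq> 1" "i8 \<noteq> 1" "i9 \<noteq> 1"
    using fusion_ring_reassoc_right_if_unit[OF fr range(2,7,9,1,8,3) cond1(5,6,4)] cond4
    by auto
  have duals: "d i5 \<in> {1..r}" "d i9 \<in> {1..r}"
    using fusion_ring_dual_in_range[OF fr] range(5,9) by blast+
  have dual_nonunit: "d i5 \<noteq> 1" "d i9 \<noteq> 1"
    using right(2) left(3) fusion_ring_dual_eq_unitD[OF fr] range(5,9) by blast+
  have "N i4 i7 k \<noteq> 0 \<and> N (d i5) i8 k \<noteq> 0 \<and> N i6 (d i9) k \<noteq> 0" if "k \<in> {k0, k1}" for k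
    using that nonzero range(4,6,7,8) duals right(1,3) left(1,2) dual_nonunit by blast
  then have "2 \<le> (\<Sum>k\<in>{1..r}. N i4 i7 k * N (d i5) i8 k * N i6 (d i9) k)"
    using two_le_sum_if_two_nonzero[of "{1..r}" k0 k1] k01 by simp
  with cond2 show False by simp
qed

theorem lemma7p19:
  fixes r :: nat and N :: "nat \<Rightarrow> nat \<Rightarrow> nat \<Rightarrow> nat" and d :: "nat \<Rightarrow> nat" and k0 k1 :: nat
  assumes "fusion_ring r N d"
    and "k0 \<in> {1..r}" and "k1 \<in> {1..r}" and "k0 \<noteq> k1"
    and "\<forall>i\<in>{1..r}. \<forall>j\<in>{1..r}. i \<noteq> 1 \<and> j \<noteq> 1 \<longrightarrow> N i j k0 \<noteq> 0 \<and> N i j k1 \<noteq> 0"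
  shows "passes_one_spectrum r N d"
  \<comment> \<open>\<open>;\<close> discharges the new subgoals last to first, so the witness premise, stated last,
    fixes all ten indices before the interchangeable range premises are matched.\<close>
  unfolding passes_one_spectrum_def
  by (intro notI, elim bexE) (rule fusion_ring_no_one_spectrum_witness[OF assms]; assumption)

end
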